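(* Let $\mathcal J=(\mathcal J_0\subseteq\cdots\subseteq\mathcal J_m)$ be a positive geometric chain of ideals in $\Phi^+$ of length $m$. Then for all $\alpha,\beta\in\Phi^+$ with $\alpha+\beta\in\Phi^+$, \[ r_\alpha(\mathcal J)+r_\beta(\mathcal J)-1\le r_{\alpha+\beta}(\mathcal J)\le r_\alpha(\mathcal J)+r_\beta(\mathcal J). \]
   Context: $\Phi$ is an irreducible crystallographic root system with positive system $\Phi^+$ and simple roots $\Pi$; the root poset is $\alpha\le\beta$ iff $\beta-\alpha$ is a nonnegative combination of positive roots; ideals are down-closed subsets. A geometric chain of ideals of length $m\ge1$ is a chain of ideals $\emptyset=\mathcal J_0\subseteq\mathcal J_1\subseteq\cdots\subseteq\mathcal J_m$ with $(\mathcal J_i+\mathcal J_j)\cap\Phi^+\subseteq\mathcal J_{i+j}$ whenever $i+j\le m$ and $(\mathcal I_i+\mathcal I_j)\cap\Phi^+\subseteq\mathcal I_{i+j}$ for all $i,j\ge 0$, where $\mathcal I_i=\Phi^+\setminus\mathcal J_i$ for $i\le m$ and $\mathcal I_i=\mathcal I_m$ for $i>m$; positive means $\Pi\subseteq\mathcal J_m$. For $\alpha\in\Phi^+$, $r_\alpha(\mathcal J)=\min\{r_1+\cdots+r_k:\ \alpha=\alpha_1+\cdots+\alpha_k,\ \alpha_i\in\mathcal J_{r_i},\ 1\le r_i\le m\}$ (well defined since $\Pi\subseteq\mathcal J_m$). *)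

theory Defs
  imports "HOL-Analysis.Analysis"
begin

definition root_system :: "'a::euclidean_space set \<Rightarrow> bool" where
  "root_system R \<longleftrightarrow>
     finite R \<and> 0 \<notin> R \<and> span R = UNIV \<and>
     (\<forall>\<alpha>\<in>R. \<forall>\<beta>\<in>R. \<beta> - (2 * (\<beta> \<bullet> \<alpha>) / (\<alpha> \<bullet> \<alpha>)) *\<^sub>R \<alpha> \<in> R) \<and>
     (\<forall>\<alpha>\<in>R. \<forall>\<beta>\<in>R. 2 * (\<beta> \<bullet> \<alpha>) / (\<alpha> \<bullet> \<alpha>) \<in> \<int>) \<and>
     (\<forall>\<alpha>\<in>R. \<forall>c::real. c *\<^sub>R \<alpha> \<in> R \<longrightarrow> c = 1 \<or> c = -1)"

definition irreducible_rs :: "'a::euclidean_space set \<Rightarrow> bool" where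
  "irreducible_rs R \<longleftrightarrow>
     \<not> (\<exists>A B. A \<noteq> {} \<and> B \<noteq> {} \<and> A \<union> B = R \<and> A \<inter> B = {} \<and>
            (\<forall>a\<in>A. \<forall>b\<in>B. a \<bullet> b = 0))"

definition simple_system :: "'a::euclidean_space set \<Rightarrow> 'a set \<Rightarrow> bool" where
  "simple_system R S \<longleftrightarrow> S \<subseteq> R \<and> independent S \<and>
     (\<forall>\<beta>\<in>R. \<exists>c::'a \<Rightarrow> nat.
        \<beta> = (\<Sum>\<alpha>\<in>S. real (c \<alpha>) *\<^sub>R \<alpha>) \<or> \<beta> = - (\<Sum>\<alpha>\<in>S. real (c \<alpha>) *\<^sub>R \<alpha>))"

definition positive_roots :: "'a::euclidean_space set \<Rightarrow> 'a set \<Rightarrow> 'a set" where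
  "positive_roots R S = {\<beta>\<in>R. \<exists>c::'a \<Rightarrow> nat. \<beta> = (\<Sum>\<alpha>\<in>S. real (c \<alpha>) *\<^sub>R \<alpha>)}"

definition root_le :: "'a::euclidean_space set \<Rightarrow> 'a \<Rightarrow> 'a \<Rightarrow> bool" where
  "root_le P \<alpha> \<beta> \<longleftrightarrow> (\<exists>c::'a \<Rightarrow> real. (\<forall>\<gamma>\<in>P. c \<gamma> \<ge> 0) \<and> \<beta> - \<alpha> = (\<Sum>\<gamma>\<in>P. c \<gamma> *\<^sub>R \<gamma>))"

definition root_ideal :: "'a::euclidean_space set \<Rightarrow> 'a set \<Rightarrow> bool" where
  "root_ideal P I \<longleftrightarrow> I \<subseteq> P \<and> (\<forall>\<beta>\<in>I. \<forall>\<alpha>\<in>P. root_le P \<alpha> \<beta> \<longrightarrow> \<alpha> \<in> I)"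

definition sumset_in :: "'a::euclidean_space set \<Rightarrow> 'a set \<Rightarrow> 'a set \<Rightarrow> 'a set" where
  "sumset_in P A B = {a + b | a b. a \<in> A \<and> b \<in> B} \<inter> P"

text \<open>Complements \<open>I_i\<close>, with \<open>I_i = I_m\<close> for \<open>i > m\<close>.\<close>
definition co_chain :: "'a::euclidean_space set \<Rightarrow> nat \<Rightarrow> (nat \<Rightarrow> 'a set) \<Rightarrow> nat \<Rightarrow> 'a set" where
  "co_chain P m J i = P - J (min i m)"

definition geometric_chain ::
  "'a::euclidean_space set \<Rightarrow> nat \<Rightarrow> (nat \<Rightarrow> 'a set) \<Rightarrow> bool" where
  "geometric_chain P m J \<longleftrightarrow>
     J 0 = {} \<and>
     (\<forall>i\<le>m. root_ideal P (J i)) \<and>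
     (\<forall>i<m. J i \<subseteq> J (Suc i)) \<and>
     (\<forall>i j. i + j \<le> m \<longrightarrow> sumset_in P (J i) (J j) \<subseteq> J (i + j)) \<and>
     (\<forall>i j. sumset_in P (co_chain P m J i) (co_chain P m J j) \<subseteq> co_chain P m J (i + j))"

definition r_val :: "nat \<Rightarrow> (nat \<Rightarrow> 'a::euclidean_space set) \<Rightarrow> 'a \<Rightarrow> nat" where
  "r_val m J \<alpha> = (LEAST n. \<exists>xs :: ('a \<times> nat) list. xs \<noteq> [] \<and>
       (\<forall>(\<gamma>, r)\<in>set xs. 1 \<le> r \<and> r \<le> m \<and> \<gamma> \<in> J r) \<and>
       \<alpha> = sum_list (map fst xs) \<and> n = sum_list (map snd xs))"

end

theory Submission
  imports Defs
begin

(*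
  The upper bound is subadditivity of r: concatenate optimal decompositions of alpha and beta.

  The lower bound is proved by induction on r(alpha + beta). Take an optimal decomposition of
  sigma = alpha + beta. If it has a single part, then sigma is in J_t with t = r(sigma); as J_t is
  an ideal, alpha and beta lie in J_t, and if a, b are the least indices with alpha in J_a and
  beta in J_b, then alpha in I_(a-1) and beta in I_(b-1) force sigma into I_(a+b-2), whence
  r(alpha) + r(beta) <= a + b <= t + 1. Otherwise (sigma, sigma) > 0 yields a part gamma with
  (sigma, gamma) > 0, so sigma - gamma is a root, positive by height, and sigma = delta + epsilon
  with r(delta) + r(epsilon) <= r(sigma). Expanding (alpha + beta, delta + epsilon) > 0 shows
  that, unless {alpha, beta} = {delta, epsilon}, one of alpha - delta, alpha - epsilon is +-rho
  for a positive root rho. Moving rho from one pair to the other, subadditivity and the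
  induction hypothesis for delta or epsilon (whose r-values are smaller) give the bound.
*)

section \<open>Root systems\<close>

lemma root_system_uminus:
  assumes "root_system R" and "\<alpha> \<in> R"
  shows "- \<alpha> \<in> R"
proof -
  have "\<alpha> \<noteq> 0" using assms unfolding root_system_def by blast
  then have "\<alpha> - (2 * (\<alpha> \<bullet> \<alpha>) / (\<alpha> \<bullet> \<alpha>)) *\<^sub>R \<alpha> = - \<alpha>"
    by (simp add: scaleR_2)
  moreover have "\<alpha> - (2 * (\<alpha> \<bullet> \<alpha>) / (\<alpha> \<bullet> \<alpha>)) *\<^sub>R \<alpha> \<in> R"
    using assms unfolding root_system_def by blast
  ultimately show ?thesis by simp
qed

lemma root_system_diff:
  assumes R: "root_system R" and "\<alpha> \<in> R" "\<beta> \<in> R" "0 < \<alpha> \<bullet> \<beta>" "\<alpha> \<noteq> \<beta>"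
  shows "\<alpha> - \<beta> \<in> R"
proof -
  \<comment> \<open>Both Cartan integers are positive; if neither is 1, both are at least 2,
    and then \<open>|\<alpha> - \<beta>|\<^sup>2 \<le> 0\<close>.\<close>
  have cartan: "2 * (x \<bullet> y) / (y \<bullet> y) = 1 \<or> y \<bullet> y \<le> x \<bullet> y"
    if "x \<in> R" "y \<in> R" "0 < x \<bullet> y" for x y
  proof -
    have "y \<noteq> 0" using R \<open>y \<in> R\<close> unfolding root_system_def by blast
    then have yy: "0 < y \<bullet> y" by simp
    have "2 * (x \<bullet> y) / (y \<bullet> y) \<in> \<int>"
      using R that unfolding root_system_def by blast
    then obtain c where c: "2 * (x \<bullet> y) / (y \<bullet> y) = of_int c"
      by (auto elim: Ints_cases)
    have "0 < 2 * (x \<bullet> y) / (y \<bullet> y)" using yy \<open>0 < x \<bullet> y\<close> by simp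
    then have "0 < c" using c by simp
    then have "c = 1 \<or> 2 \<le> c" by linarith
    then show ?thesis
    proof
      assume "2 \<le> c"
      then have "2 \<le> 2 * (x \<bullet> y) / (y \<bullet> y)" using c by simp
      then show ?thesis using yy by (simp add: le_divide_eq)
    qed (use c in simp)
  qed
  have "2 * (\<alpha> \<bullet> \<beta>) / (\<beta> \<bullet> \<beta>) = 1 \<or> \<beta> \<bullet> \<beta> \<le> \<alpha> \<bullet> \<beta>"
    using cartan assms by blast
  moreover have "2 * (\<beta> \<bullet> \<alpha>) / (\<alpha> \<bullet> \<alpha>) = 1 \<or> \<alpha> \<bullet> \<alpha> \<le> \<alpha> \<bullet> \<beta>"
    using cartan[of \<beta> \<alpha>] assms by (simp add: inner_commute)
  ultimately consider "2 * (\<alpha> \<bullet> \<beta>) / (\<beta> \<bullet> \<beta>) = 1" | "2 * (\<beta> \<bullet> \<alpha>) / (\<alpha> \<bullet> \<alpha>) = 1"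
    | "\<beta> \<bullet> \<beta> \<le> \<alpha> \<bullet> \<beta>" "\<alpha> \<bullet> \<alpha> \<le> \<alpha> \<bullet> \<beta>"
    by blast
  then show ?thesis
  proof cases
    case 1
    have "\<alpha> - (2 * (\<alpha> \<bullet> \<beta>) / (\<beta> \<bullet> \<beta>)) *\<^sub>R \<beta> \<in> R"
      using assms unfolding root_system_def by blast
    then show ?thesis unfolding 1 by simp
  next
    case 2
    have "\<beta> - (2 * (\<beta> \<bullet> \<alpha>) / (\<alpha> \<bullet> \<alpha>)) *\<^sub>R \<alpha> \<in> R"
      using assms unfolding root_system_def by blast
    then have "\<beta> - \<alpha> \<in> R" unfolding 2 by simp
    from root_system_uminus[OF R this] show ?thesis by simp
  next
    case 3
    then have "(\<alpha> - \<beta>) \<bullet> (\<alpha> - \<beta>) \<le> 0"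
      by (simp add: inner_diff_left inner_diff_right inner_commute)
    then have "\<alpha> - \<beta> = 0" by (metis inner_gt_zero_iff not_le)
    with \<open>\<alpha> \<noteq> \<beta>\<close> show ?thesis by simp
  qed
qed

lemma root_system_diff_of_add_eq:
  assumes R: "root_system R" and roots: "\<alpha> \<in> R" "\<beta> \<in> R" "\<delta> \<in> R" "\<epsilon> \<in> R"
    and eq: "\<alpha> + \<beta> = \<delta> + \<epsilon>" and "\<alpha> + \<beta> \<noteq> 0" and ne: "\<alpha> \<noteq> \<delta>" "\<alpha> \<noteq> \<epsilon>"
  shows "\<alpha> - \<delta> \<in> R \<or> \<alpha> - \<epsilon> \<in> R"
proof -
  have "\<beta> \<noteq> \<delta>" "\<beta> \<noteq> \<epsilon>" using eq ne by auto
  have "0 < (\<alpha> + \<beta>) \<bullet> (\<delta> + \<epsilon>)" using eq \<open>\<alpha> + \<beta> \<noteq> 0\<close> by simp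
  then have "0 < \<alpha> \<bullet> \<delta> \<or> 0 < \<alpha> \<bullet> \<epsilon> \<or> 0 < \<beta> \<bullet> \<delta> \<or> 0 < \<beta> \<bullet> \<epsilon>"
    unfolding inner_add_left inner_add_right by linarith
  then consider "0 < \<alpha> \<bullet> \<delta>" | "0 < \<alpha> \<bullet> \<epsilon>" | "0 < \<beta> \<bullet> \<delta>" | "0 < \<beta> \<bullet> \<epsilon>"
    by blast
  then show ?thesis
  proof cases
    case 3
    then have "\<beta> - \<delta> \<in> R" using root_system_diff R roots \<open>\<beta> \<noteq> \<delta>\<close> by blast
    moreover have "\<alpha> - \<epsilon> = - (\<beta> - \<delta>)" using eq by (simp add: algebra_simps)
    ultimately show ?thesis using root_system_uminus R by metis
  next
    case 4
    then have "\<beta> - \<epsilon> \<in> R" using root_system_diff R roots \<open>\<beta> \<noteq> \<epsilon>\<close> by blast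
    moreover have "\<alpha> - \<delta> = - (\<beta> - \<epsilon>)" using eq by (simp add: algebra_simps)
    ultimately show ?thesis using root_system_uminus R by metis
  qed (use root_system_diff R roots ne in blast)+
qed

lemma sum_list_inner_pos:
  fixes xs :: "'a::real_inner list"
  assumes "sum_list xs \<noteq> 0"
  shows "\<exists>x\<in>set xs. 0 < sum_list xs \<bullet> x"
proof (rule ccontr)
  have inner_sum: "v \<bullet> sum_list ys = sum_list (map (\<lambda>y. v \<bullet> y) ys)" for v and ys :: "'a list"
    by (induction ys) (simp_all add: inner_add_right)
  assume "\<not> ?thesis"
  then have "sum_list xs \<bullet> sum_list xs \<le> 0"
    unfolding inner_sum by (intro sum_list_nonpos) auto
  with assms show False by (metis inner_gt_zero_iff not_le)
qed

lemma root_le_add: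
  assumes "finite P" and "\<beta> \<in> P"
  shows "root_le P \<alpha> (\<alpha> + \<beta>)"
  unfolding root_le_def
proof (intro exI conjI)
  show "\<forall>\<gamma>\<in>P. 0 \<le> (if \<gamma> = \<beta> then 1 else 0 :: real)" by simp
  have "(\<Sum>\<gamma>\<in>P. (if \<gamma> = \<beta> then 1 else 0) *\<^sub>R \<gamma>) = (\<Sum>\<gamma>\<in>P. if \<gamma> = \<beta> then \<gamma> else 0)"
    by (rule sum.cong) auto
  also have "\<dots> = \<beta>" using assms by simp
  finally show "\<alpha> + \<beta> - \<alpha> = (\<Sum>\<gamma>\<in>P. (if \<gamma> = \<beta> then 1 else 0) *\<^sub>R \<gamma>)" by simp
qed

lemma root_ideal_add_left:
  assumes "finite P" and "root_ideal P I" and "\<alpha> \<in> P" "\<beta> \<in> P" "\<alpha> + \<beta> \<in> I"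
  shows "\<alpha> \<in> I"
  using assms root_le_add[of P \<beta> \<alpha>] unfolding root_ideal_def by blast

section \<open>Positive roots and height\<close>

locale based_root_system =
  fixes R S :: "'a::euclidean_space set"
  assumes root_system: "root_system R" and simple_system: "simple_system R S"
begin

abbreviation Pos :: "'a set" where
  "Pos \<equiv> positive_roots R S"

lemma finite_S: "finite S"
  using simple_system finiteI_independent unfolding simple_system_def by blast

lemma Pos_subset: "Pos \<subseteq> R"
  unfolding positive_roots_def by blast

lemma finite_Pos: "finite Pos"
  using root_system Pos_subset finite_subset unfolding root_system_def by blast

lemma zero_notin_Pos: "0 \<notin> Pos"
  using root_system Pos_subset unfolding root_system_def by blast

lemma root_in_Pos_or_uminus:
  assumes "\<gamma> \<in> R"
  shows "\<gamma> \<in> Pos \<or> - \<gamma> \<in> Pos"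
proof -
  obtain c :: "'a \<Rightarrow> nat" where
    "\<gamma> = (\<Sum>s\<in>S. real (c s) *\<^sub>R s) \<or> \<gamma> = - (\<Sum>s\<in>S. real (c s) *\<^sub>R s)"
    using simple_system assms unfolding simple_system_def by blast
  then show ?thesis
    using assms root_system_uminus[OF root_system assms] unfolding positive_roots_def by force
qed

definition height :: "'a \<Rightarrow> real" where
  "height = (SOME h. linear h \<and> (\<forall>s\<in>S. h s = 1))"

lemma linear_height: "linear height" and height_simple: "s \<in> S \<Longrightarrow> height s = 1"
proof -
  have "independent S" using simple_system unfolding simple_system_def by blast
  then have "\<exists>h. linear h \<and> (\<forall>s\<in>S. h s = 1)"
    using linear_independent_extend[of S "\<lambda>_. 1"] by auto
  then have "linear height \<and> (\<forall>s\<in>S. height s = 1)"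
    unfolding height_def by (rule someI_ex)
  then show "linear height" "s \<in> S \<Longrightarrow> height s = 1" by auto
qed

sublocale height: linear height by (fact linear_height)

lemma height_pos: "\<gamma> \<in> Pos \<Longrightarrow> 0 < height \<gamma>"
proof -
  assume "\<gamma> \<in> Pos"
  then obtain c :: "'a \<Rightarrow> nat" where c: "\<gamma> = (\<Sum>s\<in>S. real (c s) *\<^sub>R s)"
    unfolding positive_roots_def by blast
  from \<open>\<gamma> \<in> Pos\<close> zero_notin_Pos obtain s where "s \<in> S" "c s \<noteq> 0"
    using c by (metis (no_types, lifting) of_nat_0 scaleR_zero_left sum.neutral)
  then have "0 < (\<Sum>s\<in>S. real (c s))"
    using finite_S by (intro sum_pos2) auto
  also have "(\<Sum>s\<in>S. real (c s)) = height \<gamma>"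
    unfolding c by (simp add: height.sum height.scale height_simple)
  finally show ?thesis .
qed

lemma root_in_Pos_if_height_pos:
  assumes "\<gamma> \<in> R" and "0 < height \<gamma>"
  shows "\<gamma> \<in> Pos"
proof (rule ccontr)
  assume "\<gamma> \<notin> Pos"
  then have "0 < height (- \<gamma>)" using root_in_Pos_or_uminus[OF assms(1)] height_pos by blast
  with assms(2) show False by (simp add: height.neg)
qed

lemma height_sum_list_pos: "xs \<noteq> [] \<Longrightarrow> set xs \<subseteq> Pos \<Longrightarrow> 0 < height (sum_list xs)"
proof (induction xs)
  case (Cons x xs)
  then show ?case
    using height_pos[of x] by (cases "xs = []") (auto simp: height.add intro: add_pos_pos)
qed simp

lemma Pos_sum_list_simple:
  assumes "\<gamma> \<in> Pos"
  obtains xs where "xs \<noteq> []" "set xs \<subseteq> S" "\<gamma> = sum_list xs"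
proof -
  obtain c :: "'a \<Rightarrow> nat" where c: "\<gamma> = (\<Sum>s\<in>S. real (c s) *\<^sub>R s)"
    using assms unfolding positive_roots_def by blast
  have replicate: "sum_list (replicate n s) = real n *\<^sub>R s" for n and s :: 'a
    by (induction n) (simp_all add: scaleR_add_left)
  have "\<exists>xs. set xs \<subseteq> T \<and> sum_list xs = (\<Sum>s\<in>T. real (c s) *\<^sub>R s)" if "finite T" for T
    using that
  proof (induction T rule: finite_induct)
    case empty
    show ?case by (intro exI[of _ "[]"]) simp
  next
    case (insert t T)
    then obtain xs where xs: "set xs \<subseteq> T" "sum_list xs = (\<Sum>s\<in>T. real (c s) *\<^sub>R s)"
      by blast
    have "set (replicate (c t) t @ xs) \<subseteq> insert t T" using xs(1) by auto
    moreover have "sum_list (replicate (c t) t @ xs) = (\<Sum>s\<in>insert t T. real (c s) *\<^sub>R s)"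
      using insert(1,2) xs(2) by (simp add: replicate)
    ultimately show ?case by blast
  qed
  from this[OF finite_S] obtain xs
    where "set xs \<subseteq> S" "sum_list xs = (\<Sum>s\<in>S. real (c s) *\<^sub>R s)"
    by blast
  then have xs: "set xs \<subseteq> S" "\<gamma> = sum_list xs" unfolding c by simp_all
  have "xs \<noteq> []"
  proof
    assume "xs = []"
    then have "\<gamma> = 0" using xs(2) by simp
    with assms zero_notin_Pos show False by simp
  qed
  show thesis by (rule that[OF \<open>xs \<noteq> []\<close> xs])
qed

end

section \<open>Geometric chains of ideals\<close>

locale geometric_chain_system = based_root_system +
  fixes J :: "nat \<Rightarrow> 'a set" and m :: nat
  assumes m_ge_1: "1 \<le> m" and geometric_chain: "geometric_chain Pos m J"
    and simple_subset_J: "S \<subseteq> J m"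
begin

lemma J_0: "J 0 = {}"
  using geometric_chain unfolding geometric_chain_def by blast

lemma root_ideal_J: "k \<le> m \<Longrightarrow> root_ideal Pos (J k)"
  using geometric_chain unfolding geometric_chain_def by blast

lemma J_subset_Pos: "k \<le> m \<Longrightarrow> J k \<subseteq> Pos"
  using root_ideal_J unfolding root_ideal_def by blast

lemma J_mono:
  assumes "i \<le> j" and "j \<le> m"
  shows "J i \<subseteq> J j"
proof (rule lift_Suc_mono_le_ivl[OF _ \<open>i \<le> j\<close>])
  show "J n \<subseteq> J (Suc n)" if "n \<in> {..<m}" for n
    using geometric_chain that unfolding geometric_chain_def by auto
  show "{i..<j} \<subseteq> {..<m}" using \<open>j \<le> m\<close> by auto
qed

lemma J_least_index:
  "\<gamma> \<in> J k \<Longrightarrow> k \<le> m \<Longrightarrow> \<exists>i. 1 \<le> i \<and> i \<le> k \<and> \<gamma> \<in> J i \<and> \<gamma> \<notin> J (i - 1)"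
proof (induction k)
  case 0
  then show ?case using J_0 by simp
next
  case (Suc k)
  show ?case
  proof (cases "\<gamma> \<in> J k")
    case True
    then show ?thesis using Suc by (meson Suc_leD le_SucI)
  next
    case False
    then show ?thesis using Suc.prems by (intro exI[of _ "Suc k"]) simp
  qed
qed

lemma add_notin_J:
  assumes "\<alpha> \<in> Pos - J i" "\<beta> \<in> Pos - J j" "\<alpha> + \<beta> \<in> Pos" and "i \<le> m" "j \<le> m"
  shows "\<alpha> + \<beta> \<notin> J (min (i + j) m)"
proof -
  have "\<alpha> + \<beta> \<in> sumset_in Pos (co_chain Pos m J i) (co_chain Pos m J j)"
    using assms unfolding sumset_in_def co_chain_def by auto
  then have "\<alpha> + \<beta> \<in> co_chain Pos m J (i + j)"
    using geometric_chain unfolding geometric_chain_def by blast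
  then show ?thesis unfolding co_chain_def by blast
qed

definition admissible :: "('a \<times> nat) list \<Rightarrow> bool" where
  "admissible xs \<longleftrightarrow> (\<forall>(\<gamma>, k)\<in>set xs. 1 \<le> k \<and> k \<le> m \<and> \<gamma> \<in> J k)"

definition has_decomposition :: "'a \<Rightarrow> nat \<Rightarrow> bool" where
  "has_decomposition \<gamma> n \<longleftrightarrow> (\<exists>xs. xs \<noteq> [] \<and> admissible xs \<and>
     \<gamma> = sum_list (map fst xs) \<and> n = sum_list (map snd xs))"

lemma admissibleD: "admissible xs \<Longrightarrow> (\<gamma>, k) \<in> set xs \<Longrightarrow> 1 \<le> k \<and> k \<le> m \<and> \<gamma> \<in> J k"
  unfolding admissible_def by auto

lemma admissible_subset: "admissible xs \<Longrightarrow> set ys \<subseteq> set xs \<Longrightarrow> admissible ys"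
  unfolding admissible_def by auto

abbreviation r :: "'a \<Rightarrow> nat" where
  "r \<equiv> r_val m J"

lemma r_eq_Least: "r \<gamma> = (LEAST n. has_decomposition \<gamma> n)"
  unfolding r_val_def has_decomposition_def admissible_def ..

lemma has_decomposition_singleton: "\<gamma> \<in> J k \<Longrightarrow> 1 \<le> k \<Longrightarrow> k \<le> m \<Longrightarrow> has_decomposition \<gamma> k"
  unfolding has_decomposition_def admissible_def by (intro exI[of _ "[(\<gamma>, k)]"]) auto

lemma has_decomposition_add:
  assumes "has_decomposition \<alpha> a" and "has_decomposition \<beta> b"
  shows "has_decomposition (\<alpha> + \<beta>) (a + b)"
proof -
  obtain xs ys where "xs \<noteq> []" "admissible xs" "\<alpha> = sum_list (map fst xs)" "a = sum_list (map snd xs)"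
    and "admissible ys" "\<beta> = sum_list (map fst ys)" "b = sum_list (map snd ys)"
    using assms unfolding has_decomposition_def by blast
  then show ?thesis
    unfolding has_decomposition_def admissible_def by (intro exI[of _ "xs @ ys"]) auto
qed

lemma has_decomposition_ge_1: "has_decomposition \<gamma> n \<Longrightarrow> 1 \<le> n"
  unfolding has_decomposition_def admissible_def by (auto simp: neq_Nil_conv)

lemma Pos_has_decomposition:
  assumes "\<gamma> \<in> Pos"
  shows "\<exists>n. has_decomposition \<gamma> n"
proof -
  obtain xs where "xs \<noteq> []" "set xs \<subseteq> S" "\<gamma> = sum_list xs"
    using Pos_sum_list_simple[OF assms] .
  then have "has_decomposition \<gamma> (m * length xs)"
    using simple_subset_J m_ge_1 unfolding has_decomposition_def admissible_def
    by (intro exI[of _ "map (\<lambda>s. (s, m)) xs"]) (auto simp: o_def sum_list_triv)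
  then show ?thesis ..
qed

lemma has_decomposition_r: "\<gamma> \<in> Pos \<Longrightarrow> has_decomposition \<gamma> (r \<gamma>)"
  unfolding r_eq_Least using Pos_has_decomposition by (rule LeastI_ex)

lemma r_le: "has_decomposition \<gamma> n \<Longrightarrow> r \<gamma> \<le> n"
  unfolding r_eq_Least by (rule Least_le)

lemma r_ge_1: "\<gamma> \<in> Pos \<Longrightarrow> 1 \<le> r \<gamma>"
  using has_decomposition_r has_decomposition_ge_1 by blast

lemma r_le_index: "\<gamma> \<in> J k \<Longrightarrow> 1 \<le> k \<Longrightarrow> k \<le> m \<Longrightarrow> r \<gamma> \<le> k"
  using has_decomposition_singleton r_le by blast

lemma r_add_le: "\<alpha> \<in> Pos \<Longrightarrow> \<beta> \<in> Pos \<Longrightarrow> r (\<alpha> + \<beta>) \<le> r \<alpha> + r \<beta>"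
  using has_decomposition_r has_decomposition_add r_le by blast

lemma admissible_height_pos:
  assumes "xs \<noteq> []" and "admissible xs"
  shows "0 < height (sum_list (map fst xs))"
proof (rule height_sum_list_pos)
  show "map fst xs \<noteq> []" using assms(1) by simp
  show "set (map fst xs) \<subseteq> Pos"
  proof
    fix \<gamma> assume "\<gamma> \<in> set (map fst xs)"
    then obtain k where "(\<gamma>, k) \<in> set xs" by auto
    then show "\<gamma> \<in> Pos" using admissibleD[OF assms(2)] J_subset_Pos by blast
  qed
qed

lemma r_cases:
  assumes "\<sigma> \<in> Pos"
  obtains "\<sigma> \<in> J (r \<sigma>)" "1 \<le> r \<sigma>" "r \<sigma> \<le> m"
    | \<delta> \<epsilon> where "\<delta> \<in> Pos" "\<epsilon> \<in> Pos" "\<sigma> = \<delta> + \<epsilon>" "r \<delta> + r \<epsilon> \<le> r \<sigma>"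
proof -
  obtain xs where xs: "xs \<noteq> []" "admissible xs"
    "\<sigma> = sum_list (map fst xs)" "r \<sigma> = sum_list (map snd xs)"
    using has_decomposition_r[OF assms] unfolding has_decomposition_def by blast
  show thesis
  proof (cases "length xs = 1")
    case True
    then obtain \<gamma> k where "xs = [(\<gamma>, k)]" by (auto simp: length_Suc_conv)
    with xs that(1) show thesis unfolding admissible_def by simp
  next
    case False
    have "sum_list (map fst xs) \<noteq> 0" using assms zero_notin_Pos xs(3) by auto
    from sum_list_inner_pos[OF this] obtain \<gamma> k where \<gamma>k: "(\<gamma>, k) \<in> set xs" and "0 < \<sigma> \<bullet> \<gamma>"
      unfolding xs(3)[symmetric] by auto
    define ys where "ys = remove1 (\<gamma>, k) xs"
    define \<epsilon> where "\<epsilon> = sum_list (map fst ys)"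
    have "length ys = length xs - 1" using \<gamma>k by (simp add: ys_def length_remove1)
    moreover have "length xs \<noteq> 0" using xs(1) by simp
    ultimately have "length ys \<noteq> 0" using False by presburger
    then have "ys \<noteq> []" by simp
    moreover have "admissible ys"
      unfolding ys_def by (rule admissible_subset[OF xs(2) set_remove1_subset])
    ultimately have "has_decomposition \<epsilon> (sum_list (map snd ys))" and "0 < height \<epsilon>"
      unfolding \<epsilon>_def has_decomposition_def using admissible_height_pos by blast+
    have \<sigma>_eq: "\<sigma> = \<gamma> + \<epsilon>" and r_eq: "r \<sigma> = k + sum_list (map snd ys)"
      using xs(3,4) sum_list_map_remove1[OF \<gamma>k, of fst] sum_list_map_remove1[OF \<gamma>k, of snd]
      unfolding ys_def \<epsilon>_def by simp_all
    have "1 \<le> k" "k \<le> m" "\<gamma> \<in> J k" using admissibleD[OF xs(2) \<gamma>k] by auto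
    then have "\<gamma> \<in> Pos" and "r \<gamma> \<le> k" using J_subset_Pos r_le_index by auto
    have "\<sigma> \<noteq> \<gamma>" using \<open>0 < height \<epsilon>\<close> \<sigma>_eq by auto
    then have "\<sigma> - \<gamma> \<in> R"
      using root_system_diff[OF root_system] assms \<open>\<gamma> \<in> Pos\<close> Pos_subset \<open>0 < \<sigma> \<bullet> \<gamma>\<close> by blast
    then have "\<epsilon> \<in> Pos" using root_in_Pos_if_height_pos \<open>0 < height \<epsilon>\<close> \<sigma>_eq by simp
    moreover have "r \<epsilon> \<le> sum_list (map snd ys)" using r_le \<open>has_decomposition \<epsilon> _\<close> .
    ultimately show thesis using that(2) \<open>\<gamma> \<in> Pos\<close> \<sigma>_eq r_eq \<open>r \<gamma> \<le> k\<close> by simp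
  qed
qed

lemma r_add_le_Suc_index:
  assumes "\<alpha> \<in> Pos" "\<beta> \<in> Pos" and "\<alpha> + \<beta> \<in> J k" and "k \<le> m"
  shows "r \<alpha> + r \<beta> \<le> k + 1"
proof -
  have "\<alpha> \<in> J k"
    using root_ideal_add_left[OF finite_Pos root_ideal_J] assms by blast
  moreover have "\<beta> \<in> J k"
    using root_ideal_add_left[OF finite_Pos root_ideal_J, of k \<beta> \<alpha>] assms by (simp add: add.commute)
  ultimately obtain a b where a: "1 \<le> a" "a \<le> k" "\<alpha> \<in> J a" "\<alpha> \<notin> J (a - 1)"
    and b: "1 \<le> b" "b \<le> k" "\<beta> \<in> J b" "\<beta> \<notin> J (b - 1)"
    using J_least_index \<open>k \<le> m\<close> by meson
  have "\<alpha> \<in> Pos - J (a - 1)" "\<beta> \<in> Pos - J (b - 1)" "a - 1 \<le> m" "b - 1 \<le> m"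
    using assms a b by auto
  moreover have "\<alpha> + \<beta> \<in> Pos" using assms J_subset_Pos by blast
  ultimately have "\<alpha> + \<beta> \<notin> J (min (a - 1 + (b - 1)) m)" using add_notin_J by blast
  then have "\<not> k \<le> min (a - 1 + (b - 1)) m"
    using J_mono \<open>\<alpha> + \<beta> \<in> J k\<close> by (meson min.cobounded2 subsetD)
  moreover have "r \<alpha> \<le> a" "r \<beta> \<le> b" using a b \<open>k \<le> m\<close> r_le_index by auto
  ultimately show ?thesis using a b \<open>k \<le> m\<close> by linarith
qed

lemma r_add_le_exchange:
  assumes "\<alpha> \<in> Pos" "\<beta> \<in> Pos" "\<delta> \<in> Pos" "\<epsilon> \<in> Pos" "\<alpha> + \<beta> = \<delta> + \<epsilon>" "\<alpha> - \<delta> \<in> R"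
    and IH: "\<And>x y. x \<in> Pos \<Longrightarrow> y \<in> Pos \<Longrightarrow> x + y \<in> {\<delta>, \<epsilon>} \<Longrightarrow> r x + r y \<le> r (x + y) + 1"
  shows "r \<alpha> + r \<beta> \<le> r \<delta> + r \<epsilon> + 1"
  using root_in_Pos_or_uminus[OF \<open>\<alpha> - \<delta> \<in> R\<close>]
proof
  assume \<rho>: "\<alpha> - \<delta> \<in> Pos"
  have "r \<alpha> \<le> r \<delta> + r (\<alpha> - \<delta>)" using r_add_le[OF \<open>\<delta> \<in> Pos\<close> \<rho>] by simp
  moreover have "\<beta> + (\<alpha> - \<delta>) = \<epsilon>" using assms(5) by (simp add: algebra_simps)
  then have "r \<beta> + r (\<alpha> - \<delta>) \<le> r \<epsilon> + 1" using IH[OF \<open>\<beta> \<in> Pos\<close> \<rho>] by simp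
  ultimately show ?thesis by linarith
next
  assume "- (\<alpha> - \<delta>) \<in> Pos"
  then have \<rho>: "\<delta> - \<alpha> \<in> Pos" by simp
  have "\<alpha> + (\<delta> - \<alpha>) = \<delta>" by simp
  then have "r \<alpha> + r (\<delta> - \<alpha>) \<le> r \<delta> + 1" using IH[OF \<open>\<alpha> \<in> Pos\<close> \<rho>] by simp
  moreover have "\<epsilon> + (\<delta> - \<alpha>) = \<beta>" using assms(5) by (simp add: algebra_simps)
  then have "r \<beta> \<le> r \<epsilon> + r (\<delta> - \<alpha>)" using r_add_le[OF \<open>\<epsilon> \<in> Pos\<close> \<rho>] by simp
  ultimately show ?thesis by linarith
qed

lemma r_add_ge:
  "\<alpha> \<in> Pos \<Longrightarrow> \<beta> \<in> Pos \<Longrightarrow> \<alpha> + \<beta> \<in> Pos \<Longrightarrow> r \<alpha> + r \<beta> \<le> r (\<alpha> + \<beta>) + 1"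
proof (induction "r (\<alpha> + \<beta>)" arbitrary: \<alpha> \<beta> rule: less_induct)
  case less
  from r_cases[OF \<open>\<alpha> + \<beta> \<in> Pos\<close>] show ?case
  proof cases
    case 1
    then show ?thesis using r_add_le_Suc_index less.prems by blast
  next
    case (2 \<delta> \<epsilon>)
    have "r \<delta> < r (\<alpha> + \<beta>)" "r \<epsilon> < r (\<alpha> + \<beta>)"
      using 2(1,2,4) r_ge_1[of \<delta>] r_ge_1[of \<epsilon>] by linarith+
    then have IH: "r x + r y \<le> r (x + y) + 1"
      if "x \<in> Pos" "y \<in> Pos" "x + y \<in> {\<delta>, \<epsilon>}" for x y
      using less.hyps[of x y] that 2(1,2) by auto
    have "r \<alpha> + r \<beta> \<le> r \<delta> + r \<epsilon> + 1"
    proof (cases "\<alpha> = \<delta> \<or> \<alpha> = \<epsilon>")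
      case True
      then show ?thesis using \<open>\<alpha> + \<beta> = \<delta> + \<epsilon>\<close> by auto
    next
      case False
      have "\<alpha> + \<beta> \<noteq> 0" using less.prems(3) zero_notin_Pos by auto
      moreover have "\<alpha> \<in> R" "\<beta> \<in> R" "\<delta> \<in> R" "\<epsilon> \<in> R" using less.prems 2 Pos_subset by auto
      ultimately have "\<alpha> - \<delta> \<in> R \<or> \<alpha> - \<epsilon> \<in> R"
        using root_system_diff_of_add_eq[OF root_system] 2(3) False by blast
      then show ?thesis
      proof
        assume "\<alpha> - \<delta> \<in> R"
        from r_add_le_exchange[OF less.prems(1,2) 2(1,2,3) this IH] show ?thesis .
      next
        assume "\<alpha> - \<epsilon> \<in> R"
        moreover have "\<alpha> + \<beta> = \<epsilon> + \<delta>" using 2(3) by (simp add: add.commute)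
        moreover note IH[unfolded insert_commute[of \<delta>]]
        ultimately have "r \<alpha> + r \<beta> \<le> r \<epsilon> + r \<delta> + 1"
          using r_add_le_exchange[OF less.prems(1,2) 2(2,1)] by blast
        then show ?thesis by simp
      qed
    qed
    then show ?thesis using 2 by linarith
  qed
qed

end

theorem corollary3p4:
  fixes R S :: "'a::euclidean_space set" and J :: "nat \<Rightarrow> 'a set" and m :: nat
  assumes "root_system R" and "irreducible_rs R" and "simple_system R S"
    and "m \<ge> 1"
    and "geometric_chain (positive_roots R S) m J"
    and "S \<subseteq> J m"
    and "\<alpha> \<in> positive_roots R S" and "\<beta> \<in> positive_roots R S"
    and "\<alpha> + \<beta> \<in> positive_roots R S"
  shows "int (r_val m J \<alpha>) + int (r_val m J \<beta>) - 1 \<le> int (r_val m J (\<alpha> + \<beta>)) \<and>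
         r_val m J (\<alpha> + \<beta>) \<le> r_val m J \<alpha> + r_val m J \<beta>"
proof -
  interpret geometric_chain_system R S J m
    using assms by unfold_locales
  show ?thesis using r_add_ge[OF assms(7-9)] r_add_le[OF assms(7,8)] by linarith
qed

end
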